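(* Consider the $\mathrm{AND}$ instance with $n$ variables: $f(x)=\bigwedge_{i=1}^n x_i$, the input $x$ uniform on $\{0,1\}^n$, and costs $(c_1,\dots,c_n)$ a uniformly random permutation of $\{1,\dots,n\}$. Then the offline benchmark satisfies $\mathrm{opt}^{\mathrm{avg}}_0=O(1)$, while every zero-error online algorithm has expected cost $\Omega(n)$ on this instance.
   Context: Online priced query model: $f$ is given; the input and the costs are unknown; the algorithm maintains investments $\theta$ (initially $0$), each step increasing one coordinate by a positive amount; $x_i$ is revealed once $\theta_i\ge c_i$; cost is $\|\theta\|_1$ at halting. Offline algorithms know the costs and pay $c_i$ to reveal $x_i$. Zero-error means the output always equals $f(x)$. Expected costs (and $\mathrm{opt}^{\mathrm{avg}}_0$, the optimal expected cost of a zero-error offline algorithm) are taken over the random input, the random costs, and the algorithm's randomness; the implied constants are absolute. *)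

theory Defs
  imports "HOL-Probability.Probability" "HOL-Combinatorics.Multiset_Permutations"
begin

text \<open>Inputs are bit lists of length n (indices 0..n-1), cost vectors are lists
  that are permutations of {1..n}; c ! i is the cost of variable i.\<close>

definition Inputs :: "nat \<Rightarrow> bool list set" where
  "Inputs n = {x. length x = n}"

definition Costs :: "nat \<Rightarrow> nat list set" where
  "Costs n = permutations_of_set {1..n}"

definition AND_f :: "bool list \<Rightarrow> bool" where
  "AND_f x = (\<forall>b\<in>set x. b)"

text \<open>A deterministic online algorithm maps the history of observations to an action:
  either invest a positive amount delta in coordinate i (Inl (i, delta)) or halt with an
  output (Inr b).  After each investment the algorithm observes whether the invested
  coordinate is revealed (Some value) or not (None).\<close>

type_synonym on_alg = "bool option list \<Rightarrow> (nat \<times> real) + bool"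

fun on_run :: "on_alg \<Rightarrow> bool list \<Rightarrow> nat list \<Rightarrow> nat \<Rightarrow> (nat \<Rightarrow> real) \<times> bool option list" where
  "on_run A x c 0 = ((\<lambda>_. 0), [])"
| "on_run A x c (Suc k) =
     (case on_run A x c k of (\<theta>, h) \<Rightarrow>
        (case A h of
           Inl (i, \<delta>) \<Rightarrow>
             (let \<theta>' = \<theta>(i := \<theta> i + \<delta>)
              in (\<theta>', h @ [if real (c ! i) \<le> \<theta>' i then Some (x ! i) else None]))
         | Inr b \<Rightarrow> (\<theta>, h)))"

definition on_valid :: "nat \<Rightarrow> on_alg \<Rightarrow> bool" where
  "on_valid n A = (\<forall>h i \<delta>. A h = Inl (i, \<delta>) \<longrightarrow> i < n \<and> \<delta> > 0)"

definition on_halts :: "on_alg \<Rightarrow> bool list \<Rightarrow> nat list \<Rightarrow> bool" where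
  "on_halts A x c = (\<exists>k b. A (snd (on_run A x c k)) = Inr b)"

definition on_time :: "on_alg \<Rightarrow> bool list \<Rightarrow> nat list \<Rightarrow> nat" where
  "on_time A x c = (LEAST k. \<exists>b. A (snd (on_run A x c k)) = Inr b)"

definition on_output :: "on_alg \<Rightarrow> bool list \<Rightarrow> nat list \<Rightarrow> bool" where
  "on_output A x c = (case A (snd (on_run A x c (on_time A x c))) of Inr b \<Rightarrow> b | Inl _ \<Rightarrow> False)"

definition on_cost :: "on_alg \<Rightarrow> bool list \<Rightarrow> nat list \<Rightarrow> real" where
  "on_cost A x c = (\<Sum>i<length x. fst (on_run A x c (on_time A x c)) i)"

definition on_zero_error :: "nat \<Rightarrow> on_alg \<Rightarrow> bool" where
  "on_zero_error n A = (\<forall>x\<in>Inputs n. \<forall>c\<in>Costs n. on_halts A x c \<and> on_output A x c = AND_f x)"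

definition on_exp_cost :: "nat \<Rightarrow> on_alg \<Rightarrow> real" where
  "on_exp_cost n A = (\<Sum>x\<in>Inputs n. \<Sum>c\<in>Costs n. on_cost A x c) / (real (card (Inputs n)) * real (card (Costs n)))"

text \<open>A deterministic offline algorithm knows the cost vector c; given the values revealed so far
  it either queries variable i (Inl i, paying c ! i) or halts with an output (Inr b).\<close>

type_synonym off_alg = "nat list \<Rightarrow> bool list \<Rightarrow> nat + bool"

fun off_run :: "off_alg \<Rightarrow> bool list \<Rightarrow> nat list \<Rightarrow> nat \<Rightarrow> real \<times> bool list" where
  "off_run B x c 0 = (0, [])"
| "off_run B x c (Suc k) =
     (case off_run B x c k of (s, h) \<Rightarrow>
        (case B c h of
           Inl i \<Rightarrow> (s + real (c ! i), h @ [x ! i])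
         | Inr b \<Rightarrow> (s, h)))"

definition off_valid :: "nat \<Rightarrow> off_alg \<Rightarrow> bool" where
  "off_valid n B = (\<forall>c h i. B c h = Inl i \<longrightarrow> i < n)"

definition off_halts :: "off_alg \<Rightarrow> bool list \<Rightarrow> nat list \<Rightarrow> bool" where
  "off_halts B x c = (\<exists>k b. B c (snd (off_run B x c k)) = Inr b)"

definition off_time :: "off_alg \<Rightarrow> bool list \<Rightarrow> nat list \<Rightarrow> nat" where
  "off_time B x c = (LEAST k. \<exists>b. B c (snd (off_run B x c k)) = Inr b)"

definition off_output :: "off_alg \<Rightarrow> bool list \<Rightarrow> nat list \<Rightarrow> bool" where
  "off_output B x c = (case B c (snd (off_run B x c (off_time B x c))) of Inr b \<Rightarrow> b | Inl _ \<Rightarrow> False)"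

definition off_cost :: "off_alg \<Rightarrow> bool list \<Rightarrow> nat list \<Rightarrow> real" where
  "off_cost B x c = fst (off_run B x c (off_time B x c))"

definition off_zero_error :: "nat \<Rightarrow> off_alg \<Rightarrow> bool" where
  "off_zero_error n B = (\<forall>x\<in>Inputs n. \<forall>c\<in>Costs n. off_halts B x c \<and> off_output B x c = AND_f x)"

definition off_exp_cost :: "nat \<Rightarrow> off_alg \<Rightarrow> real" where
  "off_exp_cost n B = (\<Sum>x\<in>Inputs n. \<Sum>c\<in>Costs n. off_cost B x c) / (real (card (Inputs n)) * real (card (Costs n)))"

text \<open>Optimal expected cost of a zero-error offline algorithm (randomization does not lower
  the infimum, so deterministic algorithms suffice).\<close>
definition opt_avg0 :: "nat \<Rightarrow> real" where
  "opt_avg0 n = Inf {off_exp_cost n B | B. off_valid n B \<and> off_zero_error n B}"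

end

theory Submission
  imports Defs
begin

(* Offline, query the variables in increasing order of cost and stop at the first false one.
  The (j+1)-st query, of cost j+1, is made exactly when the j cheapest variables are all true,
  an event of probability 2^-j; so the expected cost is the sum of (j+1)/2^j over j < n,
  which is below 4.

  Online, as long as nothing has been revealed the algorithm only observes None, so its
  investments follow a fixed blind sequence that depends neither on the input nor on the costs.
  A zero-error algorithm cannot halt before revealing something, since it would then give the
  same answer on the all-true and the all-false input.  Each cost c_i is uniform on {1..n},
  so an investment vector with total s reveals something for at most a fraction s/n of the cost
  vectors.  For a fixed input, every cost vector on which the algorithm pays less than n/2 is
  hit by one blind investment vector of total less than n/2 (the latest of the steps these cost
  vectors reach), so at most half of the cost vectors are that cheap. *)

section \<open>Counting inputs and cost permutations\<close>

lemma card_filter_split: "finite A \<Longrightarrow> card A = card {x \<in> A. P x} + card {x \<in> A. \<not> P x}"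
  using card_Int_Diff[of A "Collect P"] by (simp add: Int_def set_diff_eq)

lemma sum_ge_threshold_card:
  fixes f :: "'a \<Rightarrow> real"
  assumes "finite S" "\<And>s. s \<in> S \<Longrightarrow> f s \<ge> 0"
  shows "t * card {s \<in> S. t \<le> f s} \<le> (\<Sum>s\<in>S. f s)"
proof -
  have "t * card {s \<in> S. t \<le> f s} = (\<Sum>s\<in>{s \<in> S. t \<le> f s}. t)" by simp
  also have "\<dots> \<le> (\<Sum>s\<in>{s \<in> S. t \<le> f s}. f s)" by (rule sum_mono) simp
  also have "\<dots> \<le> (\<Sum>s\<in>S. f s)" using assms by (intro sum_mono2) auto
  finally show ?thesis .
qed

lemma finite_Inputs: "finite (Inputs n)"
  using finite_lists_length_eq[of "UNIV :: bool set" n] by (simp add: Inputs_def)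

lemma card_Inputs: "card (Inputs n) = 2 ^ n"
  using card_lists_length_eq[of "UNIV :: bool set" n] by (simp add: Inputs_def)

lemma finite_Costs: "finite (Costs n)"
  by (simp add: Costs_def)

lemma card_Costs: "card (Costs n) = fact n"
  by (simp add: Costs_def)

lemma Costs_length: "c \<in> Costs n \<Longrightarrow> length c = n"
  unfolding Costs_def using length_finite_permutations_of_set by fastforce

lemma Costs_bij_betw_nth: "c \<in> Costs n \<Longrightarrow> bij_betw ((!) c) {..<n} {1..n}"
  using Costs_length[of c n] by (intro bij_betw_nth) (auto simp: Costs_def permutations_of_set_def)

lemma Costs_nth: "c \<in> Costs n \<Longrightarrow> i < n \<Longrightarrow> c ! i \<in> {1..n}"
  using Costs_bij_betw_nth bij_betwE by blast

lemma map_transpose_Costs: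
  assumes "v \<in> {1..n}" "w \<in> {1..n}"
  shows "map (Transposition.transpose v w) ` Costs n = Costs n"
  using permutations_of_set_image_inj[of "Transposition.transpose v w" "{1..n}"] assms
  by (simp add: Costs_def)

lemma card_Costs_nth_eq:
  assumes i: "i < n" and v: "v \<in> {1..n}" and w: "w \<in> {1..n}"
  shows "card {c \<in> Costs n. c ! i = v} = card {c \<in> Costs n. c ! i = w}"
proof -
  let ?\<tau> = "map (Transposition.transpose v w)"
  have "?\<tau> c \<in> {c \<in> Costs n. c ! i = w}" if "c \<in> Costs n" "c ! i = v" for c
    using that map_transpose_Costs[OF v w] Costs_length[of c n] i by auto
  moreover have "?\<tau> c \<in> {c \<in> Costs n. c ! i = v}" if "c \<in> Costs n" "c ! i = w" for c
    using that map_transpose_Costs[OF v w] Costs_length[of c n] i by auto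
  moreover have "?\<tau> (?\<tau> c) = c" for c
    by (simp add: map_idI)
  ultimately have "bij_betw ?\<tau> {c \<in> Costs n. c ! i = v} {c \<in> Costs n. c ! i = w}"
    by (intro bij_betw_byWitness[where f' = ?\<tau>]) auto
  then show ?thesis by (rule bij_betw_same_card)
qed

lemma card_Costs_nth_in:
  assumes i: "i < n" and V: "V \<subseteq> {1..n}"
  shows "n * card {c \<in> Costs n. c ! i \<in> V} = card V * card (Costs n)"
proof -
  define N where "N = card {c \<in> Costs n. c ! i = 1}"
  have count: "card {c \<in> Costs n. c ! i \<in> W} = card W * N" if W: "W \<subseteq> {1..n}" for W
  proof -
    have "{c \<in> Costs n. c ! i \<in> W} = (\<Union>v\<in>W. {c \<in> Costs n. c ! i = v})" by auto
    moreover have "finite W" using W finite_subset by blast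
    ultimately have "card {c \<in> Costs n. c ! i \<in> W} = (\<Sum>v\<in>W. card {c \<in> Costs n. c ! i = v})"
      by (simp add: card_UN_disjoint finite_Costs disjoint_iff)
    also have "\<dots> = (\<Sum>v\<in>W. N)"
      unfolding N_def using W i by (intro sum.cong refl card_Costs_nth_eq) auto
    finally show ?thesis by simp
  qed
  have "{c \<in> Costs n. c ! i \<in> {1..n}} = Costs n" using Costs_nth i by blast
  then have "card (Costs n) = n * N" using count[of "{1..n}"] by simp
  then show ?thesis using count[OF V] by simp
qed

lemma card_Costs_nth_le:
  assumes i: "i < n" and r: "r \<ge> 0"
  shows "real (card {c \<in> Costs n. real (c ! i) \<le> r}) \<le> r * card (Costs n) / n"
proof -
  define V where "V = {v \<in> {1..n}. real v \<le> r}"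
  have "V \<subseteq> {1..nat \<lfloor>r\<rfloor>}" by (auto simp: V_def le_nat_floor)
  then have "real (card V) \<le> r"
    using card_mono[of "{1..nat \<lfloor>r\<rfloor>}" V] of_nat_floor[OF r] by fastforce
  have eq: "{c \<in> Costs n. real (c ! i) \<le> r} = {c \<in> Costs n. c ! i \<in> V}"
    using Costs_nth i by (auto simp: V_def)
  have "n * card {c \<in> Costs n. real (c ! i) \<le> r} = card V * card (Costs n)"
    unfolding eq by (rule card_Costs_nth_in[OF i]) (auto simp: V_def)
  then have "real n * card {c \<in> Costs n. real (c ! i) \<le> r} = card V * card (Costs n)"
    by (metis of_nat_mult)
  also have "\<dots> \<le> r * card (Costs n)"
    using \<open>real (card V) \<le> r\<close> by (simp add: mult_right_mono)
  finally show ?thesis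
    using i by (simp add: field_simps)
qed

lemma card_Inputs_all_true:
  assumes "S \<subseteq> {..<n}"
  shows "card {x \<in> Inputs n. \<forall>i\<in>S. x ! i} * 2 ^ card S = 2 ^ n"
proof -
  have "finite S" using assms finite_subset by blast
  then show ?thesis using assms
  proof (induction S rule: finite_subset_induct)
    case empty
    then show ?case by (simp add: card_Inputs)
  next
    case (insert a S)
    let ?P = "{x \<in> Inputs n. \<forall>i\<in>S. x ! i}"
    define flip where "flip x = x[a := \<not> x ! a]" for x :: "bool list"
    have "bij_betw flip {x \<in> ?P. x ! a} {x \<in> ?P. \<not> x ! a}"
      using insert.hyps(2,3)
      by (intro bij_betw_byWitness[where f' = flip]) (auto simp: flip_def Inputs_def nth_list_update list_update_same_conv)
    then have "card {x \<in> ?P. x ! a} = card {x \<in> ?P. \<not> x ! a}" by (rule bij_betw_same_card)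
    moreover have "card ?P = card {x \<in> ?P. x ! a} + card {x \<in> ?P. \<not> x ! a}"
      by (rule card_filter_split) (simp add: finite_Inputs)
    moreover have "{x \<in> Inputs n. \<forall>i\<in>insert a S. x ! i} = {x \<in> ?P. x ! a}" by auto
    ultimately have "card ?P = 2 * card {x \<in> Inputs n. \<forall>i\<in>insert a S. x ! i}" by simp
    then show ?case using insert.IH insert.hyps by (simp add: mult_ac)
  qed
qed

section \<open>Lower bound for online algorithms\<close>

lemma Least_cong_upto:
  fixes P Q :: "nat \<Rightarrow> bool"
  assumes "P K" "\<And>k. k \<le> K \<Longrightarrow> P k \<longleftrightarrow> Q k"
  shows "(LEAST k. P k) = (LEAST k. Q k)"
proof (rule antisym)
  have "P (LEAST k. P k)" "(LEAST k. P k) \<le> K" using assms(1) by (rule LeastI, rule Least_le)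
  with assms(2) show "(LEAST k. Q k) \<le> (LEAST k. P k)" by (blast intro: Least_le)
  have "Q K" using assms by simp
  then have "Q (LEAST k. Q k)" "(LEAST k. Q k) \<le> K" by (rule LeastI, rule Least_le)
  with assms(2) show "(LEAST k. P k) \<le> (LEAST k. Q k)" by (blast intro: Least_le)
qed

definition reveals_none :: "nat \<Rightarrow> nat list \<Rightarrow> (nat \<Rightarrow> real) \<Rightarrow> bool" where
  "reveals_none n c \<theta> \<longleftrightarrow> (\<forall>i<n. \<theta> i < real (c ! i))"

lemma reveals_none_antimono:
  "reveals_none n c \<theta>' \<Longrightarrow> (\<And>i. \<theta> i \<le> \<theta>' i) \<Longrightarrow> reveals_none n c \<theta>"
  unfolding reveals_none_def by (meson le_less_trans)

lemma card_not_reveals_none_le: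
  assumes "\<And>i. \<theta> i \<ge> 0"
  shows "real (card {c \<in> Costs n. \<not> reveals_none n c \<theta>}) \<le> (\<Sum>i<n. \<theta> i) * card (Costs n) / n"
proof -
  have "{c \<in> Costs n. \<not> reveals_none n c \<theta>} = (\<Union>i<n. {c \<in> Costs n. real (c ! i) \<le> \<theta> i})"
    by (auto simp: reveals_none_def not_less)
  then have "card {c \<in> Costs n. \<not> reveals_none n c \<theta>} \<le> (\<Sum>i<n. card {c \<in> Costs n. real (c ! i) \<le> \<theta> i})"
    by (simp add: card_UN_le)
  then have "real (card {c \<in> Costs n. \<not> reveals_none n c \<theta>}) \<le> (\<Sum>i<n. real (card {c \<in> Costs n. real (c ! i) \<le> \<theta> i}))"
    unfolding of_nat_sum[symmetric] of_nat_le_iff .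
  also have "\<dots> \<le> (\<Sum>i<n. \<theta> i * card (Costs n) / n)"
    by (intro sum_mono card_Costs_nth_le) (use assms in auto)
  also have "\<dots> = (\<Sum>i<n. \<theta> i) * card (Costs n) / n"
    by (simp add: sum_divide_distrib sum_distrib_right)
  finally show ?thesis .
qed

lemma on_validD:
  assumes "on_valid n A" "A h = Inl (i, \<delta>)"
  shows "i < n" "\<delta> > 0"
  using assms by (auto simp: on_valid_def)

fun blind_run :: "on_alg \<Rightarrow> nat \<Rightarrow> (nat \<Rightarrow> real) \<times> bool option list" where
  "blind_run A 0 = ((\<lambda>_. 0), [])"
| "blind_run A (Suc k) =
     (case blind_run A k of (\<theta>, h) \<Rightarrow>
        (case A h of
           Inl (i, \<delta>) \<Rightarrow> (\<theta>(i := \<theta> i + \<delta>), h @ [None])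
         | Inr b \<Rightarrow> (\<theta>, h)))"

lemma blind_run_mono:
  assumes "on_valid n A" "k \<le> k'"
  shows "fst (blind_run A k) i \<le> fst (blind_run A k') i"
proof (rule lift_Suc_mono_le[of "\<lambda>k. fst (blind_run A k) i", OF _ assms(2)])
  show "fst (blind_run A k) i \<le> fst (blind_run A (Suc k)) i" for k
    by (auto dest: on_validD(2)[OF assms(1)] split: prod.split sum.split)
qed

lemma blind_run_nonneg: "on_valid n A \<Longrightarrow> fst (blind_run A k) i \<ge> 0"
  using blind_run_mono[of n A 0 k i] by simp

lemma on_run_mono:
  assumes "on_valid n A" "k \<le> k'"
  shows "fst (on_run A x c k) i \<le> fst (on_run A x c k') i"
proof (rule lift_Suc_mono_le[of "\<lambda>k. fst (on_run A x c k) i", OF _ assms(2)])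
  show "fst (on_run A x c k) i \<le> fst (on_run A x c (Suc k)) i" for k
    by (auto dest: on_validD(2)[OF assms(1)] simp: Let_def split: prod.split sum.split)
qed

lemma on_cost_nonneg: "on_valid n A \<Longrightarrow> on_cost A x c \<ge> 0"
  unfolding on_cost_def using on_run_mono[of n A 0] by (intro sum_nonneg) fastforce

lemma on_run_eq_blind_run:
  assumes "on_valid n A" "\<forall>j\<le>k. reveals_none n c (fst (blind_run A j))"
  shows "on_run A x c k = blind_run A k"
  using assms(2)
proof (induction k)
  case 0
  then show ?case by simp
next
  case (Suc k)
  then have IH: "on_run A x c k = blind_run A k" by simp
  obtain \<theta> h where run: "blind_run A k = (\<theta>, h)" by fastforce
  have hidden: "reveals_none n c (fst (blind_run A (Suc k)))" using Suc.prems by blast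
  show ?case
  proof (cases "A h")
    case (Inl a)
    then obtain i \<delta> where step: "A h = Inl (i, \<delta>)" by (cases a) auto
    with hidden run have "\<not> real (c ! i) \<le> \<theta> i + \<delta>"
      using on_validD(1)[OF assms(1) step] by (auto simp: reveals_none_def)
    with IH run step show ?thesis by (simp add: Let_def)
  next
    case Inr
    with IH run show ?thesis by simp
  qed
qed

lemma fst_on_run_eq_blind_run:
  assumes "on_valid n A" "\<forall>j<k. reveals_none n c (fst (blind_run A j))"
  shows "fst (on_run A x c k) = fst (blind_run A k)"
proof (cases k)
  case (Suc m)
  with assms have "on_run A x c m = blind_run A m" by (intro on_run_eq_blind_run) auto
  then show ?thesis
    unfolding Suc by (auto simp: Let_def split: prod.split sum.split)
qed simp

lemma zero_error_reveals_before_halting: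
  assumes valid: "on_valid n A" and zero_error: "on_zero_error n A" and "n \<ge> 1"
    and c: "c \<in> Costs n" and x: "x \<in> Inputs n"
  shows "\<exists>j\<le>on_time A x c. \<not> reveals_none n c (fst (blind_run A j))"
proof (rule ccontr)
  assume hidden: "\<not> ?thesis"
  define K where "K = on_time A x c"
  have blind: "on_run A x' c j = blind_run A j" if "j \<le> K" for x' j
    using hidden that by (intro on_run_eq_blind_run[OF valid]) (auto simp: K_def)
  have "on_halts A x c" using zero_error x c by (simp add: on_zero_error_def)
  then have "\<exists>b. A (snd (on_run A x c K)) = Inr b"
    unfolding on_halts_def K_def on_time_def by (rule LeastI_ex)
  then have halts: "\<exists>b. A (snd (on_run A x' c K)) = Inr b" for x'
    using blind by simp
  have time: "on_time A x' c = K" for x'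
    unfolding K_def on_time_def
    by (rule Least_cong_upto[where P = "\<lambda>k. \<exists>b. A (snd (on_run A x' c k)) = Inr b", OF halts])
      (simp add: blind)
  then have "on_output A x' c = on_output A x c" for x'
    unfolding on_output_def time using blind by simp
  moreover have "replicate n b \<in> Inputs n" for b by (simp add: Inputs_def)
  ultimately have "AND_f (replicate n True) = AND_f (replicate n False)"
    using zero_error c unfolding on_zero_error_def by metis
  with \<open>n \<ge> 1\<close> show False by (simp add: AND_f_def)
qed

lemma on_cost_ge_blind_investment:
  assumes valid: "on_valid n A" and "on_zero_error n A" "n \<ge> 1" "c \<in> Costs n"
    and x: "x \<in> Inputs n"
  shows "\<exists>j. \<not> reveals_none n c (fst (blind_run A j)) \<and> (\<Sum>i<n. fst (blind_run A j) i) \<le> on_cost A x c"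
proof -
  let ?reveals = "\<lambda>j. \<not> reveals_none n c (fst (blind_run A j))"
  obtain j0 where j0: "j0 \<le> on_time A x c" "?reveals j0"
    using zero_error_reveals_before_halting[OF assms] by blast
  define j where "j = (LEAST j. ?reveals j)"
  have "?reveals j" unfolding j_def by (rule LeastI[of ?reveals, OF j0(2)])
  have "j \<le> j0" unfolding j_def by (rule Least_le[of ?reveals, OF j0(2)])
  have "fst (on_run A x c j) = fst (blind_run A j)"
    using not_less_Least[of _ ?reveals] by (intro fst_on_run_eq_blind_run[OF valid]) (auto simp: j_def)
  then have "(\<Sum>i<n. fst (blind_run A j) i) = (\<Sum>i<n. fst (on_run A x c j) i)" by simp
  also have "\<dots> \<le> (\<Sum>i<n. fst (on_run A x c (on_time A x c)) i)"
    using \<open>j \<le> j0\<close> j0(1) by (intro sum_mono on_run_mono[OF valid]) simp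
  also have "\<dots> = on_cost A x c"
    using x by (simp add: on_cost_def Inputs_def)
  finally show ?thesis using \<open>?reveals j\<close> by blast
qed

lemma card_cheap_Costs_le:
  assumes valid: "on_valid n A" and "on_zero_error n A" "n \<ge> 1" "x \<in> Inputs n" "t \<ge> 0"
  shows "real (card {c \<in> Costs n. on_cost A x c < t}) \<le> t * card (Costs n) / n"
proof (cases "{c \<in> Costs n. on_cost A x c < t} = {}")
  case False
  define cheap where "cheap = {c \<in> Costs n. on_cost A x c < t}"
  have "\<exists>j. \<not> reveals_none n c (fst (blind_run A j)) \<and> (\<Sum>i<n. fst (blind_run A j) i) \<le> on_cost A x c"
    if "c \<in> cheap" for c
    using on_cost_ge_blind_investment[OF assms(1-3) _ assms(4)] that by (simp add: cheap_def)
  then obtain J where J: "\<And>c. c \<in> cheap \<Longrightarrow> \<not> reveals_none n c (fst (blind_run A (J c)))"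
    "\<And>c. c \<in> cheap \<Longrightarrow> (\<Sum>i<n. fst (blind_run A (J c)) i) \<le> on_cost A x c"
    by metis
  have "finite cheap" by (simp add: cheap_def finite_Costs)
  define K where "K = Max (J ` cheap)"
  have "K \<in> J ` cheap" unfolding K_def using \<open>finite cheap\<close> False by (simp add: cheap_def)
  then obtain c0 where c0: "c0 \<in> cheap" "J c0 = K" by blast
  have "cheap \<subseteq> {c \<in> Costs n. \<not> reveals_none n c (fst (blind_run A K))}"
  proof
    fix c assume c: "c \<in> cheap"
    have "J c \<le> K" unfolding K_def using \<open>finite cheap\<close> c by simp
    then have "\<not> reveals_none n c (fst (blind_run A K))"
      using J(1)[OF c] reveals_none_antimono blind_run_mono[OF valid] by blast
    with c show "c \<in> {c \<in> Costs n. \<not> reveals_none n c (fst (blind_run A K))}"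
      by (simp add: cheap_def)
  qed
  then have "real (card cheap) \<le> card {c \<in> Costs n. \<not> reveals_none n c (fst (blind_run A K))}"
    by (simp add: card_mono finite_Costs)
  also have "\<dots> \<le> (\<Sum>i<n. fst (blind_run A K) i) * card (Costs n) / n"
    by (intro card_not_reveals_none_le blind_run_nonneg[OF valid])
  also have "\<dots> \<le> t * card (Costs n) / n"
    using J(2)[OF c0(1)] c0 by (intro divide_right_mono mult_right_mono) (auto simp: cheap_def)
  finally show ?thesis by (simp add: cheap_def)
next
  case True
  show ?thesis using \<open>t \<ge> 0\<close> by (simp only: True card.empty) simp
qed

lemma sum_on_cost_ge:
  assumes valid: "on_valid n A" and "on_zero_error n A" "n \<ge> 1" "x \<in> Inputs n"
  shows "real n * card (Costs n) / 4 \<le> (\<Sum>c\<in>Costs n. on_cost A x c)"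
proof -
  define t :: real where "t = n / 2"
  have split: "card (Costs n) = card {c \<in> Costs n. t \<le> on_cost A x c} + card {c \<in> Costs n. on_cost A x c < t}"
    using card_filter_split[OF finite_Costs, where P = "\<lambda>c. t \<le> on_cost A x c"] by (simp add: not_le)
  have "real (card {c \<in> Costs n. on_cost A x c < t}) \<le> card (Costs n) / 2"
    using card_cheap_Costs_le[OF assms, of t] \<open>n \<ge> 1\<close> by (simp add: t_def)
  then have "card (Costs n) / 2 \<le> real (card {c \<in> Costs n. t \<le> on_cost A x c})"
    using split by linarith
  have "real n * card (Costs n) / 4 = t * (card (Costs n) / 2)" by (simp add: t_def)
  also have "\<dots> \<le> t * card {c \<in> Costs n. t \<le> on_cost A x c}"
    using \<open>card (Costs n) / 2 \<le> _\<close> by (intro mult_left_mono) (simp_all add: t_def)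
  also have "\<dots> \<le> (\<Sum>c\<in>Costs n. on_cost A x c)"
    by (intro sum_ge_threshold_card finite_Costs on_cost_nonneg[OF valid])
  finally show ?thesis .
qed

lemma on_exp_cost_ge:
  assumes "on_valid n A" "on_zero_error n A" "n \<ge> 1"
  shows "real n / 4 \<le> on_exp_cost n A"
proof -
  have "card (Inputs n) * (real n * card (Costs n) / 4) \<le> (\<Sum>x\<in>Inputs n. \<Sum>c\<in>Costs n. on_cost A x c)"
    using sum_mono[of "Inputs n", OF sum_on_cost_ge[OF assms]] by simp
  then show ?thesis
    by (simp add: on_exp_cost_def card_Inputs card_Costs field_simps)
qed

lemma nn_integral_on_exp_cost_ge:
  assumes "prob_space M" "\<forall>\<omega>\<in>space M. on_valid n (A \<omega>) \<and> on_zero_error n (A \<omega>)" "n \<ge> 1"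
  shows "ennreal (real n / 4) \<le> (\<integral>\<^sup>+ \<omega>. ennreal (on_exp_cost n (A \<omega>)) \<partial>M)"
proof -
  interpret prob_space M by (rule assms(1))
  have "ennreal (real n / 4) = (\<integral>\<^sup>+ \<omega>. ennreal (real n / 4) \<partial>M)"
    by (simp add: emeasure_space_1)
  also have "\<dots> \<le> (\<integral>\<^sup>+ \<omega>. ennreal (on_exp_cost n (A \<omega>)) \<partial>M)"
    using assms(2,3) on_exp_cost_ge by (intro nn_integral_mono ennreal_leI) auto
  finally show ?thesis .
qed

section \<open>Upper bound for the offline benchmark\<close>

definition kth_cheapest :: "nat list \<Rightarrow> nat \<Rightarrow> nat" where
  "kth_cheapest c k = the_inv_into {..<length c} ((!) c) (Suc k)"

lemma bij_betw_kth_cheapest: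
  assumes "c \<in> Costs n"
  shows "bij_betw (kth_cheapest c) {..<n} {..<n}"
proof -
  have "bij_betw Suc {..<n} {1..n}" by (simp add: image_Suc_lessThan)
  moreover have "bij_betw (the_inv_into {..<n} ((!) c)) {1..n} {..<n}"
    by (rule bij_betw_the_inv_into[OF Costs_bij_betw_nth[OF assms]])
  ultimately have "bij_betw (the_inv_into {..<n} ((!) c) \<circ> Suc) {..<n} {..<n}"
    by (rule bij_betw_trans)
  moreover have "kth_cheapest c = the_inv_into {..<n} ((!) c) \<circ> Suc"
    by (simp add: fun_eq_iff kth_cheapest_def Costs_length[OF assms])
  ultimately show ?thesis by simp
qed

lemma cost_kth_cheapest:
  assumes "c \<in> Costs n" "k < n"
  shows "c ! kth_cheapest c k = Suc k"
  using f_the_inv_into_f_bij_betw[OF Costs_bij_betw_nth[OF assms(1)]] assms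
  by (simp add: kth_cheapest_def Costs_length)

(* The test c \<in> Costs n only serves validity, which off_valid demands for every list c. *)
definition by_cost :: "nat \<Rightarrow> off_alg" where
  "by_cost n c h =
     (if c \<in> Costs n \<and> length h < n \<and> (\<forall>b\<in>set h. b) then Inl (kth_cheapest c (length h))
      else Inr (\<forall>b\<in>set h. b))"

lemma off_valid_by_cost: "off_valid n (by_cost n)"
  using bij_betw_kth_cheapest by (fastforce simp: off_valid_def by_cost_def dest: bij_betwE)

definition continues :: "nat \<Rightarrow> nat list \<Rightarrow> bool list \<Rightarrow> nat \<Rightarrow> bool" where
  "continues n c x k \<longleftrightarrow> k < n \<and> (\<forall>j<k. x ! kth_cheapest c j)"

definition stop_time :: "nat \<Rightarrow> nat list \<Rightarrow> bool list \<Rightarrow> nat" where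
  "stop_time n c x = (LEAST k. \<not> continues n c x k)"

lemma less_stop_time_iff: "j < stop_time n c x \<longleftrightarrow> continues n c x j"
proof
  assume "j < stop_time n c x"
  then show "continues n c x j" unfolding stop_time_def using not_less_Least by blast
next
  assume "continues n c x j"
  have "\<not> continues n c x n" by (simp add: continues_def)
  then have "\<not> continues n c x (stop_time n c x)" unfolding stop_time_def by (rule LeastI)
  with \<open>continues n c x j\<close> show "j < stop_time n c x"
    unfolding continues_def by (meson less_le_trans not_le_imp_less order.strict_trans1)
qed

lemma by_cost_history:
  "by_cost n c (map (\<lambda>j. x ! kth_cheapest c j) [0..<k]) =
     (if c \<in> Costs n \<and> continues n c x k then Inl (kth_cheapest c k)
      else Inr (\<forall>j<k. x ! kth_cheapest c j))"
  by (auto simp: by_cost_def continues_def)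

lemma off_run_by_cost:
  assumes c: "c \<in> Costs n" and "k \<le> stop_time n c x"
  shows "off_run (by_cost n) x c k = (\<Sum>j<k. real (Suc j), map (\<lambda>j. x ! kth_cheapest c j) [0..<k])"
  using assms(2)
proof (induction k)
  case 0
  then show ?case by simp
next
  case (Suc k)
  then have "continues n c x k" by (simp add: less_stop_time_iff[symmetric])
  moreover from this have "c ! kth_cheapest c k = Suc k"
    using cost_kth_cheapest[OF c] by (simp add: continues_def)
  ultimately show ?case using Suc c by (simp add: by_cost_history)
qed

lemma off_time_by_cost:
  assumes c: "c \<in> Costs n"
  shows "off_time (by_cost n) x c = stop_time n c x"
proof -
  have "\<not> continues n c x (stop_time n c x)" by (simp add: less_stop_time_iff[symmetric])
  then have "stop_time n c x = (LEAST k. \<exists>b. by_cost n c (snd (off_run (by_cost n) x c k)) = Inr b)"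
    unfolding stop_time_def
    by (rule Least_cong_upto) (simp add: off_run_by_cost[OF c] by_cost_history c stop_time_def)
  then show ?thesis by (simp add: off_time_def)
qed

lemma off_zero_error_by_cost: "off_zero_error n (by_cost n)"
  unfolding off_zero_error_def
proof (intro ballI conjI)
  fix x c assume x: "x \<in> Inputs n" and c: "c \<in> Costs n"
  let ?T = "stop_time n c x"
  have halt: "by_cost n c (snd (off_run (by_cost n) x c ?T)) = Inr (\<forall>j<?T. x ! kth_cheapest c j)"
    using off_run_by_cost[OF c order.refl] by (simp add: by_cost_history less_stop_time_iff[symmetric])
  then show "off_halts (by_cost n) x c" unfolding off_halts_def by blast
  have "(\<forall>j<?T. x ! kth_cheapest c j) \<longleftrightarrow> (\<forall>j<n. x ! kth_cheapest c j)"
  proof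
    assume all: "\<forall>j<?T. x ! kth_cheapest c j"
    have "\<not> continues n c x ?T" by (simp add: less_stop_time_iff[symmetric])
    with all have "n \<le> ?T" by (auto simp: continues_def)
    with all show "\<forall>j<n. x ! kth_cheapest c j" by auto
  next
    assume "\<forall>j<n. x ! kth_cheapest c j"
    then show "\<forall>j<?T. x ! kth_cheapest c j" by (auto simp: less_stop_time_iff continues_def)
  qed
  also have "\<dots> \<longleftrightarrow> (\<forall>i\<in>kth_cheapest c ` {..<n}. x ! i)" by auto
  also have "\<dots> \<longleftrightarrow> (\<forall>i<n. x ! i)"
    by (auto simp: bij_betw_imp_surj_on[OF bij_betw_kth_cheapest[OF c]])
  also have "\<dots> \<longleftrightarrow> AND_f x"
    using x by (simp add: AND_f_def Inputs_def all_set_conv_all_nth)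
  finally show "off_output (by_cost n) x c = AND_f x"
    using halt by (simp add: off_output_def off_time_by_cost[OF c])
qed

lemma off_cost_by_cost:
  assumes c: "c \<in> Costs n"
  shows "off_cost (by_cost n) x c =
    (\<Sum>j<n. if \<forall>i\<in>kth_cheapest c ` {..<j}. x ! i then real (Suc j) else 0)"
proof -
  have "{..<stop_time n c x} = {j \<in> {..<n}. j < stop_time n c x}"
    by (auto simp: less_stop_time_iff continues_def)
  then have "off_cost (by_cost n) x c = (\<Sum>j\<in>{j \<in> {..<n}. j < stop_time n c x}. real (Suc j))"
    by (simp add: off_cost_def off_time_by_cost[OF c] off_run_by_cost[OF c])
  also have "\<dots> = (\<Sum>j<n. if j < stop_time n c x then real (Suc j) else 0)"
    by (rule sum.inter_filter) simp
  also have "\<dots> = (\<Sum>j<n. if \<forall>i\<in>kth_cheapest c ` {..<j}. x ! i then real (Suc j) else 0)"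
    by (intro sum.cong) (auto simp: less_stop_time_iff continues_def)
  finally show ?thesis .
qed

lemma sum_off_cost_by_cost:
  assumes c: "c \<in> Costs n"
  shows "(\<Sum>x\<in>Inputs n. off_cost (by_cost n) x c) = 2 ^ n * (\<Sum>j<n. real (Suc j) / 2 ^ j)"
proof -
  have card: "real (card {x \<in> Inputs n. \<forall>i\<in>kth_cheapest c ` {..<j}. x ! i}) = 2 ^ n / 2 ^ j"
    if "j < n" for j
  proof -
    have "{..<j} \<subseteq> {..<n}" using that by auto
    then have "inj_on (kth_cheapest c) {..<j}" "kth_cheapest c ` {..<j} \<subseteq> {..<n}"
      using bij_betw_kth_cheapest[OF c] unfolding bij_betw_def by (auto intro: inj_on_subset)
    then have "card {x \<in> Inputs n. \<forall>i\<in>kth_cheapest c ` {..<j}. x ! i} * 2 ^ j = 2 ^ n"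
      using card_Inputs_all_true[of "kth_cheapest c ` {..<j}" n] by (simp add: card_image)
    from arg_cong[where f = real, OF this] show ?thesis by (simp add: field_simps)
  qed
  have "(\<Sum>x\<in>Inputs n. off_cost (by_cost n) x c) =
      (\<Sum>j<n. \<Sum>x\<in>Inputs n. if \<forall>i\<in>kth_cheapest c ` {..<j}. x ! i then real (Suc j) else 0)"
    by (simp add: off_cost_by_cost[OF c] sum.swap[of _ "Inputs n"])
  also have "\<dots> = (\<Sum>j<n. real (Suc j) * card {x \<in> Inputs n. \<forall>i\<in>kth_cheapest c ` {..<j}. x ! i})"
    by (simp add: sum.inter_filter[symmetric] finite_Inputs mult.commute)
  also have "\<dots> = (\<Sum>j<n. real (Suc j) * (2 ^ n / 2 ^ j))"
    by (rule sum.cong[OF refl], subst card) auto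
  also have "\<dots> = 2 ^ n * (\<Sum>j<n. real (Suc j) / 2 ^ j)"
    by (simp add: sum_distrib_left mult.commute)
  finally show ?thesis .
qed

lemma off_exp_cost_by_cost: "off_exp_cost n (by_cost n) = (\<Sum>j<n. real (Suc j) / 2 ^ j)"
proof -
  have "(\<Sum>x\<in>Inputs n. \<Sum>c\<in>Costs n. off_cost (by_cost n) x c) =
      fact n * (2 ^ n * (\<Sum>j<n. real (Suc j) / 2 ^ j))"
    by (subst sum.swap) (simp add: sum_off_cost_by_cost card_Costs)
  then show ?thesis by (simp add: off_exp_cost_def card_Inputs card_Costs)
qed

lemma sum_Suc_div_power2: "(\<Sum>j<n. real (Suc j) / 2 ^ j) = 4 - (2 * real n + 4) / 2 ^ n"
proof (induction n)
  case (Suc n)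
  have "(\<Sum>j<Suc n. real (Suc j) / 2 ^ j) = 4 - (2 * real n + 4) / 2 ^ n + real (Suc n) / 2 ^ n"
    unfolding sum.lessThan_Suc Suc.IH ..
  also have "\<dots> = 4 - (2 * real (Suc n) + 4) / 2 ^ Suc n"
    by (simp add: field_simps)
  finally show ?case .
qed simp

lemma off_exp_cost_nonneg: "off_exp_cost n B \<ge> 0"
proof -
  have "fst (off_run B x c k) \<ge> 0" for x c k
    by (induction k) (auto split: prod.split sum.split)
  then show ?thesis
    unfolding off_exp_cost_def off_cost_def by (intro divide_nonneg_nonneg sum_nonneg) simp_all
qed

lemma opt_avg0_le_4: "opt_avg0 n \<le> 4"
proof -
  let ?E = "{off_exp_cost n B | B. off_valid n B \<and> off_zero_error n B}"
  have "opt_avg0 n \<le> off_exp_cost n (by_cost n)"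
    unfolding opt_avg0_def
    using off_valid_by_cost off_zero_error_by_cost off_exp_cost_nonneg
    by (intro cInf_lower) (auto intro: bdd_belowI[of ?E 0])
  also have "\<dots> \<le> 4"
    unfolding off_exp_cost_by_cost sum_Suc_div_power2 by simp
  finally show ?thesis .
qed

theorem mainTheorem11:
  shows "(\<exists>C::real. \<forall>n\<ge>1. opt_avg0 n \<le> C) \<and>
         (\<exists>\<epsilon>::real. \<epsilon> > 0 \<and>
            (\<forall>n\<ge>1. \<forall>(M :: 'a measure) (A :: 'a \<Rightarrow> on_alg).
               prob_space M \<and> (\<forall>\<omega>\<in>space M. on_valid n (A \<omega>) \<and> on_zero_error n (A \<omega>))
               \<longrightarrow> ennreal (\<epsilon> * real n) \<le> (\<integral>\<^sup>+ \<omega>. ennreal (on_exp_cost n (A \<omega>)) \<partial>M)))"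
proof (rule conjI[OF exI[of _ "4::real"] exI[of _ "1/4::real"]])
  show "\<forall>n\<ge>1. opt_avg0 n \<le> 4" using opt_avg0_le_4 by blast
qed (use nn_integral_on_exp_cost_ge in auto)

end
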